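(* Let $\mathcal{T}=(V,A,E,f,q)$ be a decorated tree and let $\eta\in\mathrm{Cent}(\mathcal{T})$. There exists a unique decorated tree $\mathcal{T}^{(\eta)}$ satisfying: (i) $\mathcal{T}^{(\eta)}=(V,A,E,f,q^* )$ for some $q^*$; (ii) $q^*(e,\eta)=q(e,\eta)$ for all edges $e$ containing $\eta$; (iii) $q^*(e,v)=q(e,v)$ for all $v\in V\setminus\{\eta\}$ and all edges $e$ containing $v$ and not in $\gamma_{\eta,v}$; (iv) if $e=\{\eta,v\}$ is an edge with $v\in V$, then $q^*(e,v)=Q(e,v)-q(e,v)$; (v) if $e=\{u,v\}$ is an edge with $u,v\in V\setminus\{\eta\}$, then $\det^*(e)=-\det(e)$, where $\det(e)$ is computed in $\mathcal{T}$ and $\det^*(e)$ in $\mathcal{T}^{(\eta)}$. Moreover, $\mathcal{T}^{(\eta)}$ satisfies: (vi) if $v\in V\setminus\{\eta\}$ and $e$ is the unique edge in $\gamma_{\eta,v}$ containing $v$, then $Q(e,v)$ divides $q(e,v)+q^*(e,v)$.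
   Context: A graph is a pair $(X_0,X_1)$ of finite sets such that each element of $X_1$ (an edge) is a $2$-element subset of $X_0$; elements of $X_0$ are cells. A path is a tuple $(x_0,\dots,x_n)$ ($n\ge0$) of cells with $\{x_i,x_{i+1}\}$ an edge for each $i<n$, these edges pairwise distinct; a cell/edge is in the path if it is some $x_i$ / some $\{x_i,x_{i+1}\}$. The graph is a tree if any two cells $x,y$ are joined by a unique path $\gamma_{x,y}$. A decorated tree is $(V,A,E,f,q)$ with $V$ (vertices), $A$ (arrows) finite disjoint sets, $(V\cup A,E)$ a tree, every arrow contained in exactly one edge, $f:A\to\mathbb{Z}$, $q(e,x)\in\mathbb{Z}$ for each $e\in E$, $x\in e$, with $q(e,\alpha)=1$ for $\alpha\in A$, and for each $v\in V$ and distinct edges $e,e'\ni v$, $\gcd(q(e,v),q(e',v))=1$. For $x\in V\cup A$, $e\ni x$: $Q(e,x)=\prod q(e',x)$ over edges $e'\ne e$ containing $x$ (empty product $=1$); for an edge $e=\{x,y\}$, $\det(e)=q(e,x)q(e,y)-Q(e,x)Q(e,y)$. A path $(w_1,\dots,w_m)$ with $m\ge2$ satisfies $(+)$ if every edge $e\ni w_m$ other than $\{w_{m-1},w_m\}$ has $q(e,w_m)\ge1$ and at most one such edge has $q(e,w_m)>1$. An element $x\in V\cup A$ is central if $\gamma_{x,v}$ satisfies $(+)$ for every $v\in V\setminus\{x\}$; $\mathrm{Cent}(\mathcal{T})$ is the set of central elements. *)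

theory Defs
  imports Main
begin

definition is_graph :: "'a set \<Rightarrow> 'a set set \<Rightarrow> bool" where
  "is_graph X0 X1 \<longleftrightarrow> finite X0 \<and> finite X1 \<and> (\<forall>e\<in>X1. e \<subseteq> X0 \<and> card e = 2)"

definition path_edges :: "'a list \<Rightarrow> 'a set list" where
  "path_edges xs = map (\<lambda>i. {xs ! i, xs ! Suc i}) [0..<length xs - 1]"

definition is_path :: "'a set \<Rightarrow> 'a set set \<Rightarrow> 'a list \<Rightarrow> bool" where
  "is_path X0 X1 xs \<longleftrightarrow> xs \<noteq> [] \<and> set xs \<subseteq> X0 \<and> set (path_edges xs) \<subseteq> X1
     \<and> distinct (path_edges xs)"

definition is_tree :: "'a set \<Rightarrow> 'a set set \<Rightarrow> bool" where
  "is_tree X0 X1 \<longleftrightarrow> is_graph X0 X1 \<and>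
     (\<forall>x\<in>X0. \<forall>y\<in>X0. \<exists>!xs. is_path X0 X1 xs \<and> hd xs = x \<and> last xs = y)"

definition gamma :: "'a set \<Rightarrow> 'a set set \<Rightarrow> 'a \<Rightarrow> 'a \<Rightarrow> 'a list" where
  "gamma X0 X1 x y = (THE xs. is_path X0 X1 xs \<and> hd xs = x \<and> last xs = y)"

(* Decorated tree (V, A, E, f, q); q e x is only meaningful for e \<in> E, x \<in> e. *)
definition decorated_tree ::
  "'a set \<Rightarrow> 'a set \<Rightarrow> 'a set set \<Rightarrow> ('a \<Rightarrow> int) \<Rightarrow> ('a set \<Rightarrow> 'a \<Rightarrow> int) \<Rightarrow> bool" where
  "decorated_tree V A E f q \<longleftrightarrow>
     finite V \<and> finite A \<and> V \<inter> A = {} \<and> is_tree (V \<union> A) E \<and>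
     (\<forall>\<alpha>\<in>A. \<exists>!e. e \<in> E \<and> \<alpha> \<in> e) \<and>
     (\<forall>e\<in>E. \<forall>\<alpha>\<in>A. \<alpha> \<in> e \<longrightarrow> q e \<alpha> = 1) \<and>
     (\<forall>v\<in>V. \<forall>e\<in>E. \<forall>e'\<in>E. v \<in> e \<and> v \<in> e' \<and> e \<noteq> e' \<longrightarrow> gcd (q e v) (q e' v) = 1)"

definition Qf :: "'a set set \<Rightarrow> ('a set \<Rightarrow> 'a \<Rightarrow> int) \<Rightarrow> 'a set \<Rightarrow> 'a \<Rightarrow> int" where
  "Qf E q e x = (\<Prod>e'\<in>{e'\<in>E. x \<in> e' \<and> e' \<noteq> e}. q e' x)"

definition detf :: "'a set set \<Rightarrow> ('a set \<Rightarrow> 'a \<Rightarrow> int) \<Rightarrow> 'a \<Rightarrow> 'a \<Rightarrow> int" where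
  "detf E q x y = q {x,y} x * q {x,y} y - Qf E q {x,y} x * Qf E q {x,y} y"

definition plus_cond :: "'a set set \<Rightarrow> ('a set \<Rightarrow> 'a \<Rightarrow> int) \<Rightarrow> 'a list \<Rightarrow> bool" where
  "plus_cond E q ws \<longleftrightarrow> length ws \<ge> 2 \<and>
     (let wm = last ws; wm1 = ws ! (length ws - 2);
          others = {e\<in>E. wm \<in> e \<and> e \<noteq> {wm1, wm}} in
      (\<forall>e\<in>others. q e wm \<ge> 1) \<and> card {e\<in>others. q e wm > 1} \<le> 1)"

definition Cent :: "'a set \<Rightarrow> 'a set \<Rightarrow> 'a set set \<Rightarrow> ('a set \<Rightarrow> 'a \<Rightarrow> int) \<Rightarrow> 'a set" where
  "Cent V A E q = {x \<in> V \<union> A. \<forall>v\<in>V - {x}. plus_cond E q (gamma (V \<union> A) E x v)}"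

definition is_eta_transform ::
  "'a set \<Rightarrow> 'a set \<Rightarrow> 'a set set \<Rightarrow> ('a \<Rightarrow> int) \<Rightarrow> ('a set \<Rightarrow> 'a \<Rightarrow> int) \<Rightarrow> 'a
   \<Rightarrow> ('a set \<Rightarrow> 'a \<Rightarrow> int) \<Rightarrow> bool" where
  "is_eta_transform V A E f q \<eta> qs \<longleftrightarrow>
     decorated_tree V A E f qs \<and>
     (\<forall>e\<in>E. \<eta> \<in> e \<longrightarrow> qs e \<eta> = q e \<eta>) \<and>
     (\<forall>v\<in>V - {\<eta>}. \<forall>e\<in>E. v \<in> e \<and> e \<notin> set (path_edges (gamma (V \<union> A) E \<eta> v))
         \<longrightarrow> qs e v = q e v) \<and>
     (\<forall>v\<in>V. {\<eta>, v} \<in> E \<longrightarrow> qs {\<eta>, v} v = Qf E q {\<eta>, v} v - q {\<eta>, v} v) \<and>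
     (\<forall>u\<in>V - {\<eta>}. \<forall>v\<in>V - {\<eta>}. {u, v} \<in> E \<longrightarrow> detf E qs u v = - detf E q u v)"

end

theory Submission
  imports Defs "HOL-Library.Sublist"
begin

text \<open>Root the tree at \<open>\<eta>\<close> and let \<open>e\<^sub>v = {p v, v}\<close> be the edge from \<open>v \<noteq> \<eta>\<close> to its parent.
  Conditions (ii)-(iv) fix \<open>q\<^sup>*\<close> everywhere except at the pairs \<open>(e\<^sub>v, v)\<close>, and for
  \<open>p v \<noteq> \<eta>\<close> the condition \<open>det\<^sup>* e\<^sub>v = - det e\<^sub>v\<close> is linear in the unknowns:
  \<open>q(e\<^sub>v, p) (q + q\<^sup>*)(e\<^sub>v, v) = (q + q\<^sup>*)(e\<^sub>p, p) R Q(e\<^sub>v, v)\<close>, with \<open>R\<close> the product of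
  \<open>q(-, p)\<close> over the remaining edges at \<open>p\<close>. Starting from \<open>(q + q\<^sup>*)(e\<^sub>v, v) = Q(e\<^sub>v, v)\<close>
  for the neighbours of \<open>\<eta>\<close> (condition (iv)), this recursion along the path from \<open>\<eta>\<close> produces
  \<open>q\<^sup>*\<close>; it is the only solution because centrality makes \<open>q(e\<^sub>v, p) \<ge> 1\<close>, and every value
  is a multiple of \<open>Q(e\<^sub>v, v)\<close>, which is (vi). Coprimality at \<open>v\<close> survives because
  \<open>q\<^sup>*(e\<^sub>v, v) \<equiv> - q(e\<^sub>v, v)\<close> modulo every other \<open>q(e, v)\<close>.\<close>

lemma path_edges_nth: "Suc k < length xs \<Longrightarrow> path_edges xs ! k = {xs ! k, xs ! Suc k}"
  unfolding path_edges_def by (subst nth_map) auto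

lemma path_edges_subset: "e \<in> set (path_edges xs) \<Longrightarrow> e \<subseteq> set xs"
  by (auto simp: path_edges_def)

lemma path_edges_take: "path_edges (take (Suc n) xs) = take n (path_edges xs)"
  by (rule nth_equalityI) (auto simp: path_edges_nth path_edges_def)

lemma path_edges_snoc: "xs \<noteq> [] \<Longrightarrow> path_edges (xs @ [v]) = path_edges xs @ [{last xs, v}]"
proof (rule nth_equalityI)
  fix i assume "xs \<noteq> []" "i < length (path_edges (xs @ [v]))"
  then consider "Suc i < length xs" | "i = length xs - 1"
    by (fastforce simp: path_edges_def)
  then show "path_edges (xs @ [v]) ! i = (path_edges xs @ [{last xs, v}]) ! i"
    using \<open>xs \<noteq> []\<close>
    by cases (auto simp: path_edges_nth nth_append last_conv_nth path_edges_def)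
qed (simp add: path_edges_def)

lemma is_path_take: "is_path X E xs \<Longrightarrow> is_path X E (take (Suc n) xs)"
  by (auto simp: is_path_def path_edges_take dest: in_set_takeD in_set_takeD[of _ n])

lemma Qf_cong:
  "(\<And>e'. e' \<in> E \<Longrightarrow> u \<in> e' \<Longrightarrow> e' \<noteq> e \<Longrightarrow> h e' u = h' e' u) \<Longrightarrow> Qf E h e u = Qf E h' e u"
  unfolding Qf_def by (rule prod.cong) auto

lemma Qf_remove_edge:
  assumes "finite E" "e' \<in> E" "u \<in> e'" "e' \<noteq> e"
  shows "Qf E h e u = h e' u * Qf (E - {e'}) h e u"
proof -
  have "{e''\<in>E - {e'}. u \<in> e'' \<and> e'' \<noteq> e} = {e''\<in>E. u \<in> e'' \<and> e'' \<noteq> e} - {e'}"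
    by blast
  then show ?thesis
    unfolding Qf_def using assms by (simp add: prod.remove)
qed

lemma dvd_Qf: "finite E \<Longrightarrow> e' \<in> E \<Longrightarrow> u \<in> e' \<Longrightarrow> e' \<noteq> e \<Longrightarrow> h e' u dvd Qf E h e u"
  using Qf_remove_edge by fastforce

lemma detf_commute: "detf E h u v = detf E h v u"
  unfolding detf_def by (simp add: insert_commute)

lemma diff_eq_neg_diff_iff:
  fixes a b c d e R Q :: "'a::comm_ring"
  shows "a * b - c * R * Q = - (a * d - e * R * Q) \<longleftrightarrow> a * (b + d) = (c + e) * R * Q"
  by (auto simp: algebra_simps)

lemma gcd_mult_diff_left:
  fixes a c Q k :: int
  assumes "c dvd Q"
  shows "gcd (Q * k - a) c = gcd a c"
proof -
  obtain m where "Q = c * m"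
    using assms by (auto simp: dvd_def)
  then have "Q * k - a = (m * k) * c + - a"
    by simp
  then have "gcd (Q * k - a) c = gcd c ((m * k) * c + - a)"
    by (simp only: gcd.commute)
  also have "\<dots> = gcd c (- a)"
    by (rule gcd_add_mult)
  finally show ?thesis
    by (simp add: gcd.commute)
qed

locale rooted_tree =
  fixes X :: "'a set" and E :: "'a set set" and r :: 'a
  assumes tree: "is_tree X E" and root_in: "r \<in> X"
begin

abbreviation path_to :: "'a \<Rightarrow> 'a list" where
  "path_to v \<equiv> gamma X E r v"

definition parent :: "'a \<Rightarrow> 'a" where
  "parent v = path_to v ! (length (path_to v) - 2)"

abbreviation parent_edge :: "'a \<Rightarrow> 'a set" where
  "parent_edge v \<equiv> {parent v, v}"

lemma finite_edges: "finite E"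
  using tree by (simp add: is_tree_def is_graph_def)

lemma edge_subset: "e \<in> E \<Longrightarrow> e \<subseteq> X"
  using tree by (simp add: is_tree_def is_graph_def)

lemma edge_card: "e \<in> E \<Longrightarrow> card e = 2"
  using tree by (simp add: is_tree_def is_graph_def)

lemma path_to_spec: "v \<in> X \<Longrightarrow> is_path X E (path_to v) \<and> hd (path_to v) = r \<and> last (path_to v) = v"
  unfolding gamma_def by (rule theI') (use tree root_in in \<open>simp add: is_tree_def\<close>)

lemma path_to_unique:
  assumes "is_path X E xs" "hd xs = r" "last xs = v"
  shows "path_to v = xs"
proof -
  have "v \<in> X"
    using assms by (metis is_path_def last_in_set subsetD)
  then have "\<exists>!xs. is_path X E xs \<and> hd xs = r \<and> last xs = v"
    using tree root_in by (simp add: is_tree_def)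
  then show ?thesis
    unfolding gamma_def by (rule the1_equality) (simp add: assms)
qed

lemma path_to_nonempty: "v \<in> X \<Longrightarrow> path_to v \<noteq> []"
  using path_to_spec by (simp add: is_path_def)

lemma path_to_root: "path_to r = [r]"
  by (rule path_to_unique) (use root_in in \<open>auto simp: is_path_def path_edges_def\<close>)

lemma path_to_nth:
  assumes "v \<in> X" "i < length (path_to v)"
  shows "path_to (path_to v ! i) = take (Suc i) (path_to v)"
proof (rule path_to_unique)
  show "is_path X E (take (Suc i) (path_to v))" "hd (take (Suc i) (path_to v)) = r"
    using path_to_spec[OF assms(1)] by (simp_all add: is_path_take)
  show "last (take (Suc i) (path_to v)) = path_to v ! i"
    using assms(2) by (simp add: take_Suc_conv_app_nth)
qed

lemma path_to_prefix:
  assumes "u \<in> X" "v \<in> set (path_to u)"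
  shows "prefix (path_to v) (path_to u)"
  using assms path_to_nth by (metis in_set_conv_nth take_is_prefix)

lemma path_to_parent:
  assumes "v \<in> X" "v \<noteq> r"
  shows "path_to v = path_to (parent v) @ [v]" and "parent v \<in> X"
proof -
  have "length (path_to v) \<noteq> 1"
    using path_to_spec[OF assms(1)] assms(2) by (auto simp: length_Suc_conv)
  moreover have "length (path_to v) \<noteq> 0"
    using path_to_nonempty[OF assms(1)] by simp
  ultimately have len: "2 \<le> length (path_to v)"
    by linarith
  then have "path_to (parent v) = butlast (path_to v)"
    unfolding parent_def using path_to_nth[OF assms(1), of "length (path_to v) - 2"]
    by (simp add: butlast_conv_take Suc_diff_Suc numeral_2_eq_2)
  then show "path_to v = path_to (parent v) @ [v]"
    using path_to_spec[OF assms(1)] path_to_nonempty[OF assms(1)] by (metis append_butlast_last_id)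
  have "parent v \<in> set (path_to v)"
    unfolding parent_def using len by simp
  then show "parent v \<in> X"
    using path_to_spec[OF assms(1)] by (auto simp: is_path_def)
qed

lemma rev_path_to_eq_Cons:
  assumes "v \<in> X"
  shows "rev (path_to v) = v # rev (butlast (path_to v))"
proof -
  have "path_to v = butlast (path_to v) @ [v]"
    using path_to_spec[OF assms] path_to_nonempty[OF assms] by (metis append_butlast_last_id)
  then have "rev (path_to v) = rev (butlast (path_to v) @ [v])"
    by (rule arg_cong)
  then show ?thesis
    by simp
qed

lemma rev_path_to_parent: "v \<in> X \<Longrightarrow> v \<noteq> r \<Longrightarrow> rev (path_to v) = v # rev (path_to (parent v))"
  using path_to_parent(1) by simp

lemma path_to_eq_snoc_imp_parent:
  assumes "u \<in> X" "path_to v = path_to u @ [v]"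
  shows "v \<noteq> r" and "parent v = u"
proof -
  show "v \<noteq> r"
    using assms path_to_root path_to_nonempty[OF assms(1)] by auto
  show "parent v = u"
    unfolding parent_def assms(2) using path_to_spec[OF assms(1)] path_to_nonempty[OF assms(1)]
    by (simp add: nth_append last_conv_nth)
qed

lemma not_in_path_to_parent:
  assumes "v \<in> X" "v \<noteq> r"
  shows "v \<notin> set (path_to (parent v))"
proof
  assume "v \<in> set (path_to (parent v))"
  then have "prefix (path_to v) (path_to (parent v))"
    using path_to_prefix path_to_parent(2)[OF assms] by blast
  then have "length (path_to v) \<le> length (path_to (parent v))"
    by (rule prefix_length_le)
  then show False
    using path_to_parent(1)[OF assms] by simp
qed

lemma path_edges_path_to:
  assumes "v \<in> X" "v \<noteq> r"
  shows "path_edges (path_to v) = path_edges (path_to (parent v)) @ [parent_edge v]"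
  using path_to_parent[OF assms] path_to_spec[of "parent v"] path_to_nonempty[of "parent v"]
  by (metis path_edges_snoc)

lemma last_path_edges_path_to:
  "v \<in> X \<Longrightarrow> v \<noteq> r \<Longrightarrow> last (path_edges (path_to v)) = parent_edge v"
  by (simp add: path_edges_path_to)

lemma parent_edge_in_edges: "v \<in> X \<Longrightarrow> v \<noteq> r \<Longrightarrow> parent_edge v \<in> E"
  using path_edges_path_to path_to_spec by (fastforce simp: is_path_def)

lemma parent_edge_subset_path_to: "v \<in> X \<Longrightarrow> v \<noteq> r \<Longrightarrow> parent_edge v \<subseteq> set (path_to v)"
  using path_edges_path_to path_edges_subset by (metis in_set_conv_decomp)

lemma in_path_edges_path_to_iff:
  assumes "v \<in> X" "v \<noteq> r" "v \<in> e"
  shows "e \<in> set (path_edges (path_to v)) \<longleftrightarrow> e = parent_edge v"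
  using path_edges_path_to[OF assms(1,2)] path_edges_subset not_in_path_to_parent[OF assms(1,2)] assms(3)
  by auto

lemma parent_edge_parent_neq:
  assumes "v \<in> X" "v \<noteq> r" "parent v \<noteq> r"
  shows "parent_edge (parent v) \<noteq> parent_edge v"
proof
  assume "parent_edge (parent v) = parent_edge v"
  then have "v \<in> parent_edge (parent v)"
    by simp
  then show False
    using parent_edge_subset_path_to[OF path_to_parent(2)[OF assms(1,2)] assms(3)]
      not_in_path_to_parent[OF assms(1,2)] by blast
qed

lemma path_to_snoc:
  assumes "u \<in> X" "{u, v} \<in> E" "v \<notin> set (path_to u)"
  shows "path_to v = path_to u @ [v]"
proof (rule path_to_unique)
  have "v \<in> X"
    using edge_subset assms(2) by auto
  moreover have "{u, v} \<notin> set (path_edges (path_to u))"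
    using path_edges_subset assms(3) by blast
  ultimately show "is_path X E (path_to u @ [v])"
    using path_to_spec[OF assms(1)] path_to_nonempty[OF assms(1)] assms(2)
    by (auto simp: is_path_def path_edges_snoc)
qed (use path_to_spec[OF assms(1)] path_to_nonempty[OF assms(1)] in auto)

lemma edge_parent_cases:
  assumes "{u, v} \<in> E"
  shows "(v \<noteq> r \<and> parent v = u) \<or> (u \<noteq> r \<and> parent u = v)"
proof -
  have X: "u \<in> X" "v \<in> X"
    using edge_subset assms by auto
  have "{v, u} \<in> E"
    using assms by (simp add: insert_commute)
  moreover have "u \<noteq> v"
    using edge_card[OF assms] by auto
  moreover have "path_to u \<noteq> path_to v"
    using path_to_spec X \<open>u \<noteq> v\<close> by metis
  ultimately consider "v \<notin> set (path_to u)" | "u \<notin> set (path_to v)"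
    using path_to_prefix[OF X(1)] path_to_prefix[OF X(2)] prefix_order.antisym by blast
  then show ?thesis
  proof cases
    case 1
    then show ?thesis
      using path_to_snoc[OF X(1) assms] path_to_eq_snoc_imp_parent[OF X(1)] by blast
  next
    case 2
    then show ?thesis
      using path_to_snoc[OF X(2) \<open>{v, u} \<in> E\<close>] path_to_eq_snoc_imp_parent[OF X(2)] by blast
  qed
qed

lemma parent_induct [consumes 1, case_names parent]:
  assumes "v \<in> X" "\<And>v. v \<in> X \<Longrightarrow> (v \<noteq> r \<Longrightarrow> P (parent v)) \<Longrightarrow> P v"
  shows "P v"
  using assms(1)
proof (induction "length (path_to v)" arbitrary: v rule: less_induct)
  case less
  show ?case
    using assms(2)[OF less.prems] less.hyps path_to_parent[OF less.prems] by simp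
qed

end

text \<open>For the reversed path \<open>v # u # w # _\<close> from the root, \<open>flip_sum\<close> is the value of
  \<open>q + q\<^sup>*\<close> at \<open>({u, v}, v)\<close>. The division is exact because \<open>q({u, v}, u)\<close> is a factor of
  \<open>Q({w, u}, u)\<close>, which divides the value at \<open>u\<close>.\<close>

fun flip_sum :: "'a set set \<Rightarrow> ('a set \<Rightarrow> 'a \<Rightarrow> int) \<Rightarrow> 'a list \<Rightarrow> int" where
  "flip_sum E q [v, u] = Qf E q {u, v} v"
| "flip_sum E q (v # u # w # ws) =
     Qf E q {u, v} v * (flip_sum E q (u # w # ws) div q {u, v} u) * Qf (E - {{w, u}}) q {u, v} u"
| "flip_sum E q _ = 0"

lemma Qf_dvd_flip_sum: "Qf E q {u, v} v dvd flip_sum E q (v # u # ws)"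
  by (cases ws) auto

lemma decorated_tree_arrow:
  "decorated_tree V A E f q \<Longrightarrow> e \<in> E \<Longrightarrow> \<alpha> \<in> A \<Longrightarrow> \<alpha> \<in> e \<Longrightarrow> q e \<alpha> = 1"
  by (simp add: decorated_tree_def)

lemma decorated_tree_gcd:
  "decorated_tree V A E f q \<Longrightarrow> v \<in> V \<Longrightarrow> e \<in> E \<Longrightarrow> e' \<in> E \<Longrightarrow> v \<in> e \<Longrightarrow> v \<in> e' \<Longrightarrow> e \<noteq> e'
    \<Longrightarrow> gcd (q e v) (q e' v) = 1"
  by (simp add: decorated_tree_def)

locale central_decorated_tree =
  fixes V A :: "'a set" and E :: "'a set set" and f :: "'a \<Rightarrow> int"
    and q :: "'a set \<Rightarrow> 'a \<Rightarrow> int" and \<eta> :: 'a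
  assumes decorated: "decorated_tree V A E f q" and central: "\<eta> \<in> Cent V A E q"
begin

sublocale rooted_tree "V \<union> A" E \<eta>
proof
  show "is_tree (V \<union> A) E"
    using decorated by (simp add: decorated_tree_def)
  show "\<eta> \<in> V \<union> A"
    using central by (simp add: Cent_def)
qed

lemma parent_in_vertices:
  assumes "v \<in> V \<union> A" "v \<noteq> \<eta>" "parent v \<noteq> \<eta>"
  shows "parent v \<in> V"
proof (rule ccontr)
  assume "parent v \<notin> V"
  then have "parent v \<in> A"
    using path_to_parent(2)[OF assms(1,2)] by simp
  then have "\<exists>!e. e \<in> E \<and> parent v \<in> e"
    using decorated by (simp add: decorated_tree_def)
  moreover have "parent_edge (parent v) \<in> E" "parent_edge v \<in> E"
    using parent_edge_in_edges path_to_parent(2) assms by auto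
  ultimately show False
    using parent_edge_parent_neq[OF assms] by (metis insertI1 insertI2)
qed

lemma q_pos:
  assumes "u \<in> V - {\<eta>}" "e \<in> E" "u \<in> e" "e \<noteq> parent_edge u"
  shows "1 \<le> q e u"
proof -
  have "plus_cond E q (path_to u)"
    using central assms(1) by (simp add: Cent_def)
  moreover have "last (path_to u) = u"
    using path_to_spec assms(1) by simp
  ultimately have "\<forall>e\<in>{e\<in>E. u \<in> e \<and> e \<noteq> parent_edge u}. 1 \<le> q e u"
    unfolding plus_cond_def Let_def parent_def[symmetric] by simp
  then show ?thesis
    using assms by blast
qed

abbreviation flip_sum_at :: "'a \<Rightarrow> int" where
  "flip_sum_at v \<equiv> flip_sum E q (rev (path_to v))"

lemma flip_sum_at_root_child:
  assumes "v \<in> V \<union> A" "v \<noteq> \<eta>" "parent v = \<eta>"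
  shows "flip_sum_at v = Qf E q (parent_edge v) v"
  using rev_path_to_parent[OF assms(1,2)] assms(3) path_to_root by simp

lemma flip_sum_at_step:
  assumes "v \<in> V \<union> A" "v \<noteq> \<eta>" "parent v \<noteq> \<eta>"
  shows "flip_sum_at v = Qf E q (parent_edge v) v * (flip_sum_at (parent v) div q (parent_edge v) (parent v))
    * Qf (E - {parent_edge (parent v)}) q (parent_edge v) (parent v)"
proof -
  have p: "parent v \<in> V \<union> A" "parent (parent v) \<in> V \<union> A"
    using path_to_parent(2) assms by auto
  show ?thesis
    unfolding rev_path_to_parent[OF assms(1,2)] rev_path_to_parent[OF p(1) assms(3)]
      rev_path_to_eq_Cons[OF p(2)]
    by simp
qed

lemma Qf_dvd_flip_sum_at:
  assumes "v \<in> V \<union> A" "v \<noteq> \<eta>"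
  shows "Qf E q (parent_edge v) v dvd flip_sum_at v"
  unfolding rev_path_to_parent[OF assms] rev_path_to_eq_Cons[OF path_to_parent(2)[OF assms]]
  by (rule Qf_dvd_flip_sum)

lemma q_dvd_flip_sum_at_parent:
  assumes "v \<in> V \<union> A" "v \<noteq> \<eta>" "parent v \<noteq> \<eta>"
  shows "q (parent_edge v) (parent v) dvd flip_sum_at (parent v)"
proof (rule dvd_trans)
  show "q (parent_edge v) (parent v) dvd Qf E q (parent_edge (parent v)) (parent v)"
    using dvd_Qf[OF finite_edges parent_edge_in_edges[OF assms(1,2)] _
        parent_edge_parent_neq[OF assms, symmetric]]
    by simp
  show "Qf E q (parent_edge (parent v)) (parent v) dvd flip_sum_at (parent v)"
    using Qf_dvd_flip_sum_at[OF path_to_parent(2)[OF assms(1,2)] assms(3)] .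
qed

lemma flip_sum_at_recurrence:
  assumes "v \<in> V \<union> A" "v \<noteq> \<eta>" "parent v \<noteq> \<eta>"
  shows "q (parent_edge v) (parent v) * flip_sum_at v
    = flip_sum_at (parent v) * Qf (E - {parent_edge (parent v)}) q (parent_edge v) (parent v)
      * Qf E q (parent_edge v) v"
proof -
  define d where "d = flip_sum_at (parent v) div q (parent_edge v) (parent v)"
  have "flip_sum_at (parent v) = q (parent_edge v) (parent v) * d"
    unfolding d_def using q_dvd_flip_sum_at_parent[OF assms] by simp
  then show ?thesis
    unfolding flip_sum_at_step[OF assms] d_def[symmetric] by (simp only: ac_simps)
qed

definition qstar :: "'a set \<Rightarrow> 'a \<Rightarrow> int" where
  "qstar e x = (if x \<in> V - {\<eta>} \<and> e = parent_edge x then flip_sum_at x - q e x else q e x)"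

definition agrees_off_parent_edges :: "('a set \<Rightarrow> 'a \<Rightarrow> int) \<Rightarrow> bool" where
  "agrees_off_parent_edges h \<longleftrightarrow>
     (\<forall>e\<in>E. \<forall>x\<in>e. \<not> (x \<in> V - {\<eta>} \<and> e = parent_edge x) \<longrightarrow> h e x = q e x)"

lemma agrees_off_parent_edges_q: "agrees_off_parent_edges q"
  by (simp add: agrees_off_parent_edges_def)

lemma agrees_off_parent_edges_qstar: "agrees_off_parent_edges qstar"
  by (simp add: agrees_off_parent_edges_def qstar_def)

lemma qstar_parent_edge: "v \<in> V - {\<eta>} \<Longrightarrow> qstar (parent_edge v) v + q (parent_edge v) v = flip_sum_at v"
  by (simp add: qstar_def)

lemma eta_transform_agrees_off_parent_edges:
  assumes "is_eta_transform V A E f q \<eta> h"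
  shows "agrees_off_parent_edges h"
  unfolding agrees_off_parent_edges_def
proof (intro ballI impI)
  fix e x
  assume e: "e \<in> E" "x \<in> e" and off: "\<not> (x \<in> V - {\<eta>} \<and> e = parent_edge x)"
  have "x \<in> V \<union> A"
    using edge_subset e by auto
  then consider "x \<in> A" | "x = \<eta>" | "x \<in> V - {\<eta>}" "e \<noteq> parent_edge x"
    using off by blast
  then show "h e x = q e x"
  proof cases
    case 1
    have "decorated_tree V A E f h"
      using assms by (simp add: is_eta_transform_def)
    then show ?thesis
      using decorated_tree_arrow[OF _ e(1) 1 e(2)] decorated by metis
  next
    case 2
    then show ?thesis
      using assms e unfolding is_eta_transform_def by auto
  next
    case 3
    then show ?thesis
      using assms e in_path_edges_path_to_iff unfolding is_eta_transform_def by auto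
  qed
qed

lemma detf_parent_edge:
  assumes h: "agrees_off_parent_edges h" and v: "v \<in> V - {\<eta>}" "parent v \<noteq> \<eta>"
  shows "detf E h (parent v) v = q (parent_edge v) (parent v) * h (parent_edge v) v
    - h (parent_edge (parent v)) (parent v) * Qf (E - {parent_edge (parent v)}) q (parent_edge v) (parent v)
      * Qf E q (parent_edge v) v"
proof -
  let ?p = "parent v" and ?e = "parent_edge v" and ?ep = "parent_edge (parent v)"
  have vX: "v \<in> V \<union> A" "v \<noteq> \<eta>"
    using v by auto
  have p: "?p \<in> V - {\<eta>}" "?p \<in> V \<union> A"
    using parent_in_vertices[OF vX v(2)] v(2) by auto
  have E: "?e \<in> E" "?ep \<in> E" "?ep \<noteq> ?e"
    using parent_edge_in_edges parent_edge_parent_neq vX p v(2) by auto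
  have agrees: "h e x = q e x" if "e \<in> E" "x \<in> e" "\<not> (x \<in> V - {\<eta>} \<and> e = parent_edge x)" for e x
    using h that by (simp add: agrees_off_parent_edges_def)
  have "h ?e ?p = q ?e ?p"
    using agrees E by auto
  moreover have "Qf E h ?e v = Qf E q ?e v"
    by (rule Qf_cong) (simp add: agrees)
  moreover have "Qf E h ?e ?p = h ?ep ?p * Qf (E - {?ep}) q ?e ?p"
    using Qf_remove_edge[OF finite_edges E(2) _ E(3)] Qf_cong[of "E - {?ep}" ?p ?e h q] agrees
    by simp
  ultimately show ?thesis
    by (simp add: detf_def)
qed

lemma detf_flip_iff:
  assumes "agrees_off_parent_edges h" "v \<in> V - {\<eta>}" "parent v \<noteq> \<eta>"
  shows "detf E h (parent v) v = - detf E q (parent v) v \<longleftrightarrow>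
    q (parent_edge v) (parent v) * (h (parent_edge v) v + q (parent_edge v) v)
    = (h (parent_edge (parent v)) (parent v) + q (parent_edge (parent v)) (parent v))
      * Qf (E - {parent_edge (parent v)}) q (parent_edge v) (parent v) * Qf E q (parent_edge v) v"
  unfolding detf_parent_edge[OF assms] detf_parent_edge[OF agrees_off_parent_edges_q assms(2,3)]
  by (rule diff_eq_neg_diff_iff)

lemma detf_qstar:
  assumes v: "v \<in> V - {\<eta>}" "parent v \<noteq> \<eta>"
  shows "detf E qstar (parent v) v = - detf E q (parent v) v"
proof -
  let ?p = "parent v" and ?e = "parent_edge v"
  have vX: "v \<in> V \<union> A" "v \<noteq> \<eta>"
    using v by auto
  have p: "?p \<in> V - {\<eta>}"
    using parent_in_vertices[OF vX v(2)] v(2) by simp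
  have "q ?e ?p * (qstar ?e v + q ?e v) = q ?e ?p * flip_sum_at v"
    using qstar_parent_edge[OF v(1)] by simp
  also have "\<dots> = flip_sum_at ?p * Qf (E - {parent_edge ?p}) q ?e ?p * Qf E q ?e v"
    by (rule flip_sum_at_recurrence[OF vX v(2)])
  also have "\<dots> = (qstar (parent_edge ?p) ?p + q (parent_edge ?p) ?p)
      * Qf (E - {parent_edge ?p}) q ?e ?p * Qf E q ?e v"
    using qstar_parent_edge[OF p] by simp
  finally show ?thesis
    using detf_flip_iff[OF agrees_off_parent_edges_qstar v] by blast
qed

lemma gcd_qstar_parent_edge:
  assumes v: "v \<in> V - {\<eta>}" and e: "e \<in> E" "v \<in> e" "e \<noteq> parent_edge v"
  shows "gcd (qstar (parent_edge v) v) (qstar e v) = 1"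
proof -
  have vX: "v \<in> V \<union> A" "v \<noteq> \<eta>"
    using v by auto
  obtain k where k: "flip_sum_at v = Qf E q (parent_edge v) v * k"
    using Qf_dvd_flip_sum_at[OF vX] by blast
  have "q e v dvd Qf E q (parent_edge v) v"
    using dvd_Qf[OF finite_edges e] .
  moreover have "gcd (q (parent_edge v) v) (q e v) = 1"
    using decorated_tree_gcd[OF decorated _ parent_edge_in_edges[OF vX] e(1) _ e(2)] v e(3) by simp
  ultimately show ?thesis
    using e k v by (simp add: qstar_def gcd_mult_diff_left)
qed

lemma decorated_tree_qstar: "decorated_tree V A E f qstar"
proof -
  have "gcd (qstar e v) (qstar e' v) = 1"
    if "v \<in> V" "e \<in> E" "e' \<in> E" "v \<in> e" "v \<in> e'" "e \<noteq> e'" for v e e'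
  proof (cases "v \<in> V - {\<eta>} \<and> (e = parent_edge v \<or> e' = parent_edge v)")
    case True
    then consider "v \<in> V - {\<eta>}" "e = parent_edge v" | "v \<in> V - {\<eta>}" "e' = parent_edge v"
      by blast
    then show ?thesis
    proof cases
      case 1
      then show ?thesis
        using gcd_qstar_parent_edge[of v e'] that by simp
    next
      case 2
      then have "gcd (qstar e' v) (qstar e v) = 1"
        using gcd_qstar_parent_edge[of v e] that by simp
      then show ?thesis
        by (simp add: gcd.commute)
    qed
  next
    case False
    then have "qstar e v = q e v" "qstar e' v = q e' v"
      by (auto simp: qstar_def)
    then show ?thesis
      using decorated_tree_gcd[OF decorated that] by simp
  qed
  moreover have "qstar e \<alpha> = 1" if "e \<in> E" "\<alpha> \<in> A" "\<alpha> \<in> e" for e \<alpha>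
  proof -
    have "V \<inter> A = {}"
      using decorated by (simp add: decorated_tree_def)
    then have "\<alpha> \<notin> V"
      using that(2) by blast
    then show ?thesis
      using decorated_tree_arrow[OF decorated that] by (simp add: qstar_def)
  qed
  moreover have "finite V \<and> finite A \<and> V \<inter> A = {} \<and> is_tree (V \<union> A) E
      \<and> (\<forall>\<alpha>\<in>A. \<exists>!e. e \<in> E \<and> \<alpha> \<in> e)"
    using decorated by (simp add: decorated_tree_def)
  ultimately show ?thesis
    unfolding decorated_tree_def by blast
qed

lemma is_eta_transform_qstar: "is_eta_transform V A E f q \<eta> qstar"
  unfolding is_eta_transform_def
proof (intro conjI ballI impI)
  show "decorated_tree V A E f qstar"
    by (rule decorated_tree_qstar)
  show "qstar e \<eta> = q e \<eta>" for e
    by (simp add: qstar_def)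
  show "qstar e v = q e v"
    if "v \<in> V - {\<eta>}" "e \<in> E" "v \<in> e \<and> e \<notin> set (path_edges (path_to v))" for v e
    using that in_path_edges_path_to_iff by (auto simp: qstar_def)
  show "qstar {\<eta>, v} v = Qf E q {\<eta>, v} v - q {\<eta>, v} v" if "v \<in> V" "{\<eta>, v} \<in> E" for v
  proof -
    have "v \<noteq> \<eta>" "parent v = \<eta>"
      using edge_parent_cases[OF that(2)] by auto
    then show ?thesis
      using flip_sum_at_root_child[of v] qstar_parent_edge[of v] that by simp
  qed
  show "detf E qstar u v = - detf E q u v" if "u \<in> V - {\<eta>}" "v \<in> V - {\<eta>}" "{u, v} \<in> E" for u v
    using edge_parent_cases[OF that(3)]
  proof
    assume "v \<noteq> \<eta> \<and> parent v = u"
    then show ?thesis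
      using detf_qstar[of v] that by simp
  next
    assume "u \<noteq> \<eta> \<and> parent u = v"
    then have "detf E qstar v u = - detf E q v u"
      using detf_qstar[of u] that by simp
    then show ?thesis
      by (simp add: detf_commute)
  qed
qed

lemma eta_transform_root_child:
  assumes "is_eta_transform V A E f q \<eta> h" "v \<in> V - {\<eta>}" "parent v = \<eta>"
  shows "h (parent_edge v) v = Qf E q (parent_edge v) v - q (parent_edge v) v"
proof -
  have "{\<eta>, v} \<in> E"
    using parent_edge_in_edges assms(2,3) by fastforce
  then show ?thesis
    using assms unfolding is_eta_transform_def by simp
qed

lemma eta_transform_detf:
  assumes "is_eta_transform V A E f q \<eta> h" "v \<in> V - {\<eta>}" "parent v \<in> V - {\<eta>}"
  shows "detf E h (parent v) v = - detf E q (parent v) v"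
proof -
  have "parent_edge v \<in> E"
    using parent_edge_in_edges assms(2) by blast
  then show ?thesis
    using assms unfolding is_eta_transform_def by blast
qed

lemma eta_transform_parent_edge_unique:
  assumes h: "is_eta_transform V A E f q \<eta> h" and v: "v \<in> V - {\<eta>}"
  shows "h (parent_edge v) v = qstar (parent_edge v) v"
proof -
  from v have "v \<in> V \<union> A"
    by blast
  then show ?thesis
    using v
  proof (induction rule: parent_induct)
    case (parent v)
    show ?case
    proof (cases "parent v = \<eta>")
      case True
      then show ?thesis
        using eta_transform_root_child[OF h parent.prems True]
          eta_transform_root_child[OF is_eta_transform_qstar parent.prems True] by simp
    next
      case False
      let ?p = "parent v" and ?e = "parent_edge v"
      have vX: "v \<in> V \<union> A" "v \<noteq> \<eta>"
        using parent.prems by auto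
      have p: "?p \<in> V - {\<eta>}"
        using parent_in_vertices[OF vX False] False by simp
      have "q ?e ?p * (h ?e v + q ?e v)
          = (qstar (parent_edge ?p) ?p + q (parent_edge ?p) ?p)
            * Qf (E - {parent_edge ?p}) q ?e ?p * Qf E q ?e v"
        using detf_flip_iff[OF eta_transform_agrees_off_parent_edges[OF h] parent.prems False]
          eta_transform_detf[OF h parent.prems p] parent.IH[OF vX(2) p] by simp
      also have "\<dots> = q ?e ?p * (qstar ?e v + q ?e v)"
        using detf_flip_iff[OF agrees_off_parent_edges_qstar parent.prems False]
          detf_qstar[OF parent.prems False] by simp
      finally have "q ?e ?p * (h ?e v + q ?e v) = q ?e ?p * (qstar ?e v + q ?e v)" .
      moreover have "1 \<le> q ?e ?p"
        using q_pos[OF p parent_edge_in_edges[OF vX] _ parent_edge_parent_neq[OF vX False, symmetric]]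
        by simp
      ultimately show ?thesis
        by simp
    qed
  qed
qed

lemma eta_transform_unique:
  assumes h: "is_eta_transform V A E f q \<eta> h" and e: "e \<in> E" "x \<in> e"
  shows "h e x = qstar e x"
proof (cases "x \<in> V - {\<eta>} \<and> e = parent_edge x")
  case True
  then show ?thesis
    using eta_transform_parent_edge_unique[OF h] by blast
next
  case False
  then have "h e x = q e x" "qstar e x = q e x"
    using eta_transform_agrees_off_parent_edges[OF h] agrees_off_parent_edges_qstar e
    unfolding agrees_off_parent_edges_def by auto
  then show ?thesis
    by simp
qed

lemma Qf_dvd_q_plus_qstar:
  assumes "v \<in> V - {\<eta>}"
  shows "Qf E q (parent_edge v) v dvd q (parent_edge v) v + qstar (parent_edge v) v"
  using qstar_parent_edge[OF assms] Qf_dvd_flip_sum_at[of v] assms by (simp add: add.commute)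

end

theorem lemma6p5:
  fixes V A :: "'a set" and E :: "'a set set" and f :: "'a \<Rightarrow> int"
    and q :: "'a set \<Rightarrow> 'a \<Rightarrow> int" and \<eta> :: 'a
  assumes "decorated_tree V A E f q"
    and "\<eta> \<in> Cent V A E q"
  shows "\<exists>qs. is_eta_transform V A E f q \<eta> qs
           \<and> (\<forall>qs'. is_eta_transform V A E f q \<eta> qs' \<longrightarrow> (\<forall>e\<in>E. \<forall>x\<in>e. qs' e x = qs e x))
           \<and> (\<forall>v\<in>V - {\<eta>}. Qf E q (last (path_edges (gamma (V \<union> A) E \<eta> v))) v
                 dvd q (last (path_edges (gamma (V \<union> A) E \<eta> v))) v
                     + qs (last (path_edges (gamma (V \<union> A) E \<eta> v))) v)"
proof -
  interpret central_decorated_tree V A E f q \<eta>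
    using assms by unfold_locales
  have "Qf E q (last (path_edges (path_to v))) v
          dvd q (last (path_edges (path_to v))) v + qstar (last (path_edges (path_to v))) v"
    if "v \<in> V - {\<eta>}" for v
    using Qf_dvd_q_plus_qstar[OF that] last_path_edges_path_to[of v] that by simp
  then show ?thesis
    using is_eta_transform_qstar eta_transform_unique by blast
qed

end
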